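(* Let $G$ be a finite-rank splitter which is $p$-reduced for every prime $p$, and let $0\neq U$ be a pure subgroup of $G$. Then $\mathrm{nuc}\,U=\mathrm{nuc}\,G$.
   Context: For a torsion-free abelian group $G\neq0$, $\mathrm{nuc}\,G$ is the largest subring $R$ of $\mathbb{Q}$ such that $G$ is an $R$-module. A torsion-free $R$-module $G$ over its nucleus $R$ is a finite-rank splitter if $\mathrm{Ext}(G',G)=0$ for all finite-rank $R$-submodules $G'$ of $G$. $G$ is $p$-reduced if $\bigcap_{k\in\omega}p^kG=0$. A subgroup $U\subseteq G$ is pure if $G/U$ is torsion-free. *)

theory Defs
  imports Complex_Main "HOL-Computational_Algebra.Primes" "HOL-Algebra.Group"
begin

text \<open>Torsion-free abelian groups are modelled as subgroups of a real vector space
  (hence of a rational vector space); rational scalars act via of_rat r *R x.\<close>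

definition subgrp :: "'a::real_vector set \<Rightarrow> bool" where
  "subgrp G \<longleftrightarrow> 0 \<in> G \<and> (\<forall>x\<in>G. \<forall>y\<in>G. x + y \<in> G) \<and> (\<forall>x\<in>G. - x \<in> G)"

definition grp_of :: "'a::real_vector set \<Rightarrow> 'a monoid" where
  "grp_of G = \<lparr>carrier = G, mult = (+), one = 0\<rparr>"

definition subring_Q :: "rat set \<Rightarrow> bool" where
  "subring_Q R \<longleftrightarrow> 1 \<in> R \<and> (\<forall>a\<in>R. \<forall>b\<in>R. a + b \<in> R \<and> a - b \<in> R \<and> a * b \<in> R)"

definition is_module :: "rat set \<Rightarrow> 'a::real_vector set \<Rightarrow> bool" where
  "is_module R G \<longleftrightarrow> (\<forall>r\<in>R. \<forall>x\<in>G. of_rat r *\<^sub>R x \<in> G)"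

definition nuc :: "'a::real_vector set \<Rightarrow> rat set" where
  "nuc G = (GREATEST R. subring_Q R \<and> is_module R G)"

definition submodule :: "rat set \<Rightarrow> 'a::real_vector set \<Rightarrow> 'a set \<Rightarrow> bool" where
  "submodule R H G \<longleftrightarrow> H \<subseteq> G \<and> subgrp H \<and> is_module R H"

definition finite_rank :: "'a::real_vector set \<Rightarrow> bool" where
  "finite_rank H \<longleftrightarrow> (\<exists>F. finite F \<and> F \<subseteq> H \<and>
      H \<subseteq> {\<Sum>f\<in>F. of_rat (c f) *\<^sub>R f | c. True})"

text \<open>Every such extension is in bijection with B \<times> A as a set, so it suffices to let the
  carrier of E range over subsets of 'a \<times> 'a.\<close>
definition Ext_zero :: "'a::real_vector set \<Rightarrow> 'a set \<Rightarrow> bool" where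
  "Ext_zero A B \<longleftrightarrow>
    (\<forall>(E :: ('a \<times> 'a) monoid) \<iota> \<pi>.
       comm_group E \<and> \<iota> \<in> hom (grp_of B) E \<and> inj_on \<iota> B \<and>
       \<pi> \<in> hom E (grp_of A) \<and> \<pi> ` carrier E = A \<and>
       \<iota> ` B = {e \<in> carrier E. \<pi> e = 0}
       \<longrightarrow> (\<exists>\<sigma> \<in> hom (grp_of A) E. \<forall>a\<in>A. \<pi> (\<sigma> a) = a))"

definition finite_rank_splitter :: "'a::real_vector set \<Rightarrow> bool" where
  "finite_rank_splitter G \<longleftrightarrow> subgrp G \<and> G \<noteq> {0} \<and>
     (\<forall>G'. submodule (nuc G) G' G \<and> finite_rank G' \<longrightarrow> Ext_zero G' G)"

definition p_reduced :: "nat \<Rightarrow> 'a::real_vector set \<Rightarrow> bool" where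
  "p_reduced p G \<longleftrightarrow> (\<Inter>k. {of_nat (p ^ k) *\<^sub>R x | x. x \<in> G}) = {0}"

definition pure_subgrp :: "'a::real_vector set \<Rightarrow> 'a set \<Rightarrow> bool" where
  "pure_subgrp U G \<longleftrightarrow> U \<subseteq> G \<and> subgrp U \<and>
     (\<forall>x\<in>G. \<forall>n::int. n \<noteq> 0 \<and> of_int n *\<^sub>R x \<in> U \<longrightarrow> x \<in> U)"

end

theory Submission
  imports Defs
begin

text \<open>If G is p-reduced for every prime p, then no nonzero subgroup H of G admits
  division by any prime: 1/p acting on H would make each x in H divisible by every
  power of p within G. On the other hand a subring of the rationals that is larger than
  the integers contains some 1/p, by Bezout applied to a non-integral element. Hence
  every nonzero subgroup of G, in particular U and G itself, has nucleus exactly the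
  integers.\<close>

definition module_scalars :: "'a::real_vector set \<Rightarrow> rat set" where
  "module_scalars H = {r. \<forall>x\<in>H. of_rat r *\<^sub>R x \<in> H}"

lemma subgrp_closed:
  assumes "subgrp H" and "x \<in> H" and "y \<in> H"
  shows "x + y \<in> H" and "x - y \<in> H"
proof -
  show "x + y \<in> H"
    using assms unfolding subgrp_def by blast
  have "- y \<in> H"
    using assms unfolding subgrp_def by blast
  with assms show "x - y \<in> H"
    unfolding subgrp_def diff_conv_add_uminus by blast
qed

lemma subring_Q_module_scalars:
  assumes "subgrp H"
  shows "subring_Q (module_scalars H)"
  unfolding subring_Q_def
proof (intro conjI ballI)
  show "1 \<in> module_scalars H"
    unfolding module_scalars_def by simp
next
  fix a b assume a: "a \<in> module_scalars H" and b: "b \<in> module_scalars H"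
  show "a + b \<in> module_scalars H"
    unfolding module_scalars_def
  proof (intro CollectI ballI)
    fix x assume "x \<in> H"
    then have "of_rat a *\<^sub>R x + of_rat b *\<^sub>R x \<in> H"
      using a b assms subgrp_closed(1) unfolding module_scalars_def by blast
    then show "of_rat (a + b) *\<^sub>R x \<in> H"
      by (simp add: of_rat_add scaleR_add_left)
  qed
  show "a - b \<in> module_scalars H"
    unfolding module_scalars_def
  proof (intro CollectI ballI)
    fix x assume "x \<in> H"
    then have "of_rat a *\<^sub>R x - of_rat b *\<^sub>R x \<in> H"
      using a b assms subgrp_closed(2) unfolding module_scalars_def by blast
    then show "of_rat (a - b) *\<^sub>R x \<in> H"
      by (simp add: of_rat_diff scaleR_diff_left)
  qed
  show "a * b \<in> module_scalars H"
    using a b unfolding module_scalars_def by (simp add: of_rat_mult flip: scaleR_scaleR)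
qed

lemma nuc_eq_module_scalars:
  assumes "subgrp H"
  shows "nuc H = module_scalars H"
  unfolding nuc_def
proof (rule Greatest_equality)
  show "subring_Q (module_scalars H) \<and> is_module (module_scalars H) H"
    using subring_Q_module_scalars[OF assms]
    unfolding is_module_def module_scalars_def by blast
next
  show "R \<subseteq> module_scalars H" if "subring_Q R \<and> is_module R H" for R
    using that unfolding is_module_def module_scalars_def by blast
qed

lemma subring_Q_closed:
  assumes "subring_Q R" and "a \<in> R" and "b \<in> R"
  shows "a + b \<in> R" and "a - b \<in> R" and "a * b \<in> R"
  using assms unfolding subring_Q_def by auto

lemma subring_Q_Ints:
  assumes R: "subring_Q R"
  shows "\<int> \<subseteq> R"
proof -
  have "1 \<in> R"
    using R unfolding subring_Q_def by blast
  then have "0 \<in> R"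
    using subring_Q_closed(2)[OF R, of 1 1] by simp
  have nat: "of_nat n \<in> R" for n
  proof (induction n)
    case 0
    show ?case
      using \<open>0 \<in> R\<close> by simp
  next
    case (Suc n)
    then show ?case
      using subring_Q_closed(1)[OF R Suc \<open>1 \<in> R\<close>] by (simp add: add.commute)
  qed
  have "of_int n \<in> R" for n
  proof (cases "n \<ge> 0")
    case True
    then show ?thesis
      using nat[of "nat n"] by simp
  next
    case False
    then have "of_int n = 0 - of_nat (nat (- n))"
      by simp
    also have "\<dots> \<in> R"
      using subring_Q_closed(2)[OF R \<open>0 \<in> R\<close> nat] .
    finally show ?thesis .
  qed
  then show ?thesis
    by (auto elim: Ints_cases)
qed

text \<open>With r = a/b in lowest terms, p a prime factor of b and u a + v b = 1,
  the element (b/p) (u r + v) of R equals 1/p.\<close>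
lemma subring_Q_inverse_prime:
  assumes R: "subring_Q R" and "r \<in> R" and "r \<notin> \<int>"
  obtains p :: nat where "prime p" and "1 / of_nat p \<in> R"
proof -
  obtain a b where q: "quotient_of r = (a, b)"
    by (cases "quotient_of r")
  have r_eq: "r = of_int a / of_int b" and "b > 0" and "coprime a b"
    using quotient_of_div[OF q] quotient_of_denom_pos[OF q] quotient_of_coprime[OF q] by auto
  have "nat b \<noteq> 1"
  proof
    assume "nat b = 1"
    then have "b = 1"
      using \<open>b > 0\<close> by (simp add: nat_eq_iff)
    then have "r = of_int a"
      using r_eq by simp
    then show False
      using \<open>r \<notin> \<int>\<close> by simp
  qed
  then obtain p :: nat where p: "prime p" "p dvd nat b"
    using prime_factor_nat by blast
  then have "int p dvd b"
    using \<open>b > 0\<close> int_dvd_int_iff[of p "nat b"] by simp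
  then obtain c where c: "b = int p * c" ..
  obtain u v where uv: "u * a + v * b = 1"
    using \<open>coprime a b\<close> bezout_int[of a b] by auto
  have "of_int b \<noteq> (0::rat)"
    using \<open>b > 0\<close> by simp
  then have "of_int u * r + of_int v = of_int (u * a + v * b) / (of_int b :: rat)"
    unfolding r_eq by (simp add: field_simps)
  also have "\<dots> = 1 / (of_nat p * of_int c)"
    using uv c by simp
  finally have "of_int c * (of_int u * r + of_int v) = 1 / of_nat p"
    using \<open>of_int b \<noteq> 0\<close> c by (simp add: field_simps)
  moreover have "of_int c \<in> R" "of_int u \<in> R" "of_int v \<in> R"
    using subring_Q_Ints[OF R] by auto
  then have "of_int c * (of_int u * r + of_int v) \<in> R"
    using \<open>r \<in> R\<close> by (intro subring_Q_closed[OF R])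
  ultimately have "1 / of_nat p \<in> R"
    by argo
  with p(1) show ?thesis
    by (rule that)
qed

lemma subgrp_divisible_by_powers:
  assumes "1 / of_nat p \<in> module_scalars H" and "p \<noteq> 0" and "x \<in> H"
  shows "x \<in> {of_nat (p ^ k) *\<^sub>R y | y. y \<in> H}"
proof (induction k)
  case 0
  then show ?case
    using \<open>x \<in> H\<close> by auto
next
  case (Suc k)
  then obtain y where y: "x = of_nat (p ^ k) *\<^sub>R y" "y \<in> H"
    by blast
  have "of_rat (1 / of_nat p) *\<^sub>R y \<in> H"
    using assms(1) y(2) unfolding module_scalars_def by blast
  moreover have "x = of_nat (p ^ Suc k) *\<^sub>R (of_rat (1 / of_nat p) *\<^sub>R y)"
    using y(1) \<open>p \<noteq> 0\<close> by (simp add: of_rat_divide)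
  ultimately show ?case
    by blast
qed

lemma nuc_eq_Ints_if_p_reduced:
  assumes H: "subgrp H" "H \<subseteq> G" "H \<noteq> {0}"
    and reduced: "\<forall>p. prime p \<longrightarrow> p_reduced p G"
  shows "nuc H = \<int>"
proof
  show "\<int> \<subseteq> nuc H"
    using subring_Q_Ints[OF subring_Q_module_scalars[OF H(1)]] nuc_eq_module_scalars[OF H(1)]
    by simp
next
  show "nuc H \<subseteq> \<int>"
  proof (rule ccontr)
    assume "\<not> nuc H \<subseteq> \<int>"
    then obtain r where "r \<in> nuc H" "r \<notin> \<int>"
      by blast
    then obtain p :: nat where p: "prime p" "1 / of_nat p \<in> module_scalars H"
      using subring_Q_inverse_prime[OF subring_Q_module_scalars[OF H(1)]]
        nuc_eq_module_scalars[OF H(1)]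
      by metis
    obtain x where x: "x \<in> H" "x \<noteq> 0"
      using H(1,3) unfolding subgrp_def by blast
    have "x \<in> (\<Inter>k. {of_nat (p ^ k) *\<^sub>R y | y. y \<in> G})"
      using subgrp_divisible_by_powers[OF p(2) _ x(1)] prime_gt_0_nat[OF p(1)] H(2) by blast
    then show False
      using reduced p(1) x(2) unfolding p_reduced_def by blast
  qed
qed

theorem corollary4p4:
  fixes G U :: "'a::real_vector set"
  assumes "finite_rank_splitter G"
    and "\<forall>p. prime p \<longrightarrow> p_reduced p G"
    and "pure_subgrp U G"
    and "U \<noteq> {0}"
  shows "nuc U = nuc G"
proof -
  have "subgrp G" "G \<noteq> {0}"
    using assms(1) unfolding finite_rank_splitter_def by auto
  moreover have "subgrp U" "U \<subseteq> G"
    using assms(3) unfolding pure_subgrp_def by auto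
  ultimately have "nuc U = \<int>" and "nuc G = \<int>"
    using nuc_eq_Ints_if_p_reduced assms(2,4) by blast+
  then show ?thesis
    by simp
qed

end
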